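(* (i) For any $p$ with $3/(3+\gamma+2)<p\le\infty$ and any $\theta>2+3(1-1/p)$, for all $i,j$ and $v\in\mathbb R^3$, $$|(a_{ij}*f)(v)\,v_iv_j|+|(a_{ij}*f)(v)\,v_i|+|(a_{ij}*f)(v)|\lesssim\langle v\rangle^{\gamma+2}\|f\|_{L^p(\langle v\rangle^\theta)}.$$ (ii) For any $p$ with $3/(3+\gamma+1)<p\le\infty$ and any $\theta'>3(1-1/p)$, $$|(b_j*f)(v)|\lesssim\langle v\rangle^{\gamma+1}\|f\|_{L^p(\langle v\rangle^{\theta'})}.$$
   Context: Fix $\gamma\in[-3,-2)$. For $z\in\mathbb R^3$, $a_{ij}(z)=|z|^{\gamma+2}(\delta_{ij}-z_iz_j/|z|^2)$ and $b_i(z)=-2|z|^\gamma z_i$; convolutions are in $v\in\mathbb R^3$; in $(a_{ij}*f)v_iv_j$ and $(a_{ij}*f)v_i$ summation over repeated indices is understood. $\langle v\rangle=(1+|v|^2)^{1/2}$, $\|f\|_{L^p(m)}=\|mf\|_{L^p}$. $A\lesssim B$: $A\le CB$ with $C$ independent of $f$ and $v$. *)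

theory Defs
  imports "HOL-Analysis.Analysis" "HOL-Probability.Essential_Supremum"
begin

type_synonym R3 = "real ^ 3"

definition jbr :: "R3 \<Rightarrow> real" where
  "jbr v = sqrt (1 + (norm v)\<^sup>2)"

text \<open>Landau kernels a_ij(z) = |z|^(gamma+2) (delta_ij - z_i z_j/|z|^2), b_i(z) = -2|z|^gamma z_i
  (value at z = 0 is irrelevant, a null set; here it is 0).\<close>
definition akernel :: "real \<Rightarrow> 3 \<Rightarrow> 3 \<Rightarrow> R3 \<Rightarrow> real" where
  "akernel \<gamma> i j z = norm z powr (\<gamma> + 2) * ((if i = j then 1 else 0) - z $ i * z $ j / (norm z)\<^sup>2)"

definition bkernel :: "real \<Rightarrow> 3 \<Rightarrow> R3 \<Rightarrow> real" where
  "bkernel \<gamma> i z = - 2 * norm z powr \<gamma> * z $ i"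

definition conv :: "(R3 \<Rightarrow> real) \<Rightarrow> (R3 \<Rightarrow> real) \<Rightarrow> R3 \<Rightarrow> real" where
  "conv K f v = (\<integral>w. K (v - w) * f w \<partial>lborel)"

definition inv_exp :: "ennreal \<Rightarrow> real" where
  "inv_exp p = (if p = \<infinity> then 0 else 1 / enn2real p)"

definition wLp_norm :: "ennreal \<Rightarrow> (R3 \<Rightarrow> real) \<Rightarrow> (R3 \<Rightarrow> real) \<Rightarrow> ennreal" where
  "wLp_norm p m f =
     (if p = \<infinity> then esssup lborel (\<lambda>x. ennreal \<bar>m x * f x\<bar>)
      else (let I = (\<integral>\<^sup>+ x. ennreal (\<bar>m x * f x\<bar> powr enn2real p) \<partial>lborel)
            in if I = \<infinity> then \<infinity> else ennreal (enn2real I powr (1 / enn2real p))))"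

end

theory Submission
  imports Defs
begin

(* Every Landau coefficient is dominated pointwise by a weighted potential
     integral |v - w|^a <w>^beta |f(w)| dw,
   with (a, beta) = (gamma + 2, 2) for the a_ij terms and (gamma + 1, 0) for b_j. The factors v_i
   cost no growth in v because a_ij(z) is |z|^(gamma + 2) times the orthogonal projection onto z^perp,
   and for z = v - w the projection of v coincides with that of w.
   Hoelder's inequality (or the sup bound if p = infinity) reduces the potential to
     integral |v - w|^s <w>^(-c) dw <= C <v>^s      (-3 < s < 0, 3 < c),
   which follows by splitting at |v - w| = <v>/2 -- near v one has <w> >= <v>/6 -- and covering
   both pieces by dyadic balls. The lower bounds on p and theta are exactly the conditions
   -3 < a q and 3 < (theta - beta) q for the conjugate exponent q. *)

lemma jbr_ge_1: "1 \<le> jbr v"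
  unfolding jbr_def by simp

lemma jbr_pos: "0 < jbr v"
  using jbr_ge_1[of v] by linarith

lemma norm_le_jbr: "norm v \<le> jbr v"
  unfolding jbr_def by (simp add: real_le_rsqrt)

lemma jbr_le_1_plus_norm: "jbr v \<le> 1 + norm v"
  unfolding jbr_def by (rule real_le_lsqrt) (auto simp: power2_eq_square algebra_simps)

lemma borel_measurable_jbr [measurable]: "jbr \<in> borel_measurable borel"
  unfolding jbr_def by measurable

lemma jbr_ge_if_near:
  assumes "norm (v - w) \<le> jbr v / 2"
  shows "jbr v / 6 \<le> jbr w"
proof (cases "norm v \<ge> 2")
  case True
  have "norm v - norm (v - w) \<le> norm w"
    using norm_triangle_ineq2[of v "v - w"] by simp
  then show ?thesis
    using assms True jbr_le_1_plus_norm[of v] norm_le_jbr[of w] by linarith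
next
  case False
  then show ?thesis
    using jbr_le_1_plus_norm[of v] jbr_ge_1[of w] by linarith
qed

lemma ex_dyadic_bracket:
  assumes "1 \<le> (d::real)"
  shows "\<exists>k::nat. 2 ^ k \<le> d \<and> d < 2 ^ (k + 1)"
proof (intro exI conjI)
  define k where "k = nat \<lfloor>log 2 d\<rfloor>"
  have k: "real k = of_int \<lfloor>log 2 d\<rfloor>"
    unfolding k_def using assms by simp
  have "(2::real) ^ k = 2 powr of_int \<lfloor>log 2 d\<rfloor>"
    by (simp add: powr_realpow flip: k)
  also have "\<dots> \<le> 2 powr log 2 d"
    by (intro powr_mono) auto
  finally show "(2::real) ^ k \<le> d"
    using assms by simp
  have "d = 2 powr log 2 d"
    using assms by simp
  also have "\<dots> < 2 powr (real k + 1)"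
    unfolding k by (intro powr_less_mono) linarith+
  also have "\<dots> = 2 ^ (k + 1)"
    using powr_realpow[of 2 "k + 1"] by (simp add: add.commute)
  finally show "d < 2 ^ (k + 1)" .
qed

lemma ennreal_le_suminf: "(f i :: ennreal) \<le> (\<Sum>k. f k)"
  using sum_le_suminf[OF summableI, of "{i}" f] by simp

lemma cball_in_borel [measurable]: "cball x r \<in> sets borel"
  by (simp add: borel_closed)

lemma nn_integral_le_dyadic_cover:
  fixes x :: "'a::euclidean_space" and g :: "'a \<Rightarrow> ennreal"
  assumes cover: "\<And>w. g w \<le> (\<Sum>k. ennreal (a k) * indicator (cball x (r k)) w)"
    and a: "\<And>k. 0 \<le> a k" and r: "\<And>k. 0 \<le> r k"
    and geometric: "\<And>k. a k * (unit_ball_vol DIM('a) * r k ^ DIM('a)) = c * \<rho> ^ k"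
    and \<rho>: "0 \<le> \<rho>" "\<rho> < 1"
  shows "(\<integral>\<^sup>+ w. g w \<partial>lborel) \<le> ennreal (c / (1 - \<rho>))"
proof -
  have "0 \<le> a 0 * (unit_ball_vol DIM('a) * r 0 ^ DIM('a))"
    using a r by simp
  then have "0 \<le> c"
    unfolding geometric by simp
  have "(\<integral>\<^sup>+ w. g w \<partial>lborel) \<le> (\<integral>\<^sup>+ w. (\<Sum>k. ennreal (a k) * indicator (cball x (r k)) w) \<partial>lborel)"
    by (intro nn_integral_mono cover)
  also have "\<dots> = (\<Sum>k. ennreal (a k) * emeasure lborel (cball x (r k)))"
    by (subst nn_integral_suminf) (auto simp: nn_integral_cmult_indicator)
  also have "\<dots> = (\<Sum>k. ennreal (c * \<rho> ^ k))"
  proof (rule suminf_cong)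
    fix k
    have "ennreal (a k) * emeasure lborel (cball x (r k))
          = ennreal (a k * (unit_ball_vol DIM('a) * r k ^ DIM('a)))"
      using a r by (simp add: emeasure_cball ennreal_mult)
    then show "ennreal (a k) * emeasure lborel (cball x (r k)) = ennreal (c * \<rho> ^ k)"
      unfolding geometric .
  qed
  also have "\<dots> = ennreal (\<Sum>k. c * \<rho> ^ k)"
    using \<rho> \<open>0 \<le> c\<close> by (intro suminf_ennreal2 summable_mult summable_geometric) auto
  also have "(\<Sum>k. c * \<rho> ^ k) = c / (1 - \<rho>)"
    using \<rho> by (simp add: suminf_mult suminf_geometric)
  finally show ?thesis .
qed

lemma two_pow_powr: "((2::real) ^ k) powr u = (2 powr u) ^ k"
  by (simp add: powr_realpow[symmetric] powr_powr powr_power mult.commute)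

lemma powr_divide_two_pow: "0 < (R::real) \<Longrightarrow> (R / 2 ^ k) powr u = R powr u * (2 powr (-u)) ^ k"
  by (subst powr_divide) (simp_all add: two_pow_powr powr_minus divide_inverse power_inverse)

lemma nn_integral_norm_powr_cball_le:
  assumes s: "- real DIM('a) < s" "s < 0"
  shows "\<exists>C>0. \<forall>(x::'a::euclidean_space) R. 0 < R \<longrightarrow>
           (\<integral>\<^sup>+ w. ennreal (norm (x - w) powr s * indicator (cball x R) w) \<partial>lborel)
             \<le> ennreal (C * R powr (s + DIM('a)))"
proof -
  define n where "n = DIM('a)"
  define V where "V = unit_ball_vol n"
  define \<rho> where "\<rho> = 2 powr (-(s + n))"
  have \<rho>: "0 < \<rho>" "\<rho> < 1"
    unfolding \<rho>_def n_def using s powr_less_mono[of "-(s + DIM('a))" 0 2] by auto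
  have "0 < V * 2 powr (-s) / (1 - \<rho>)"
    unfolding V_def using \<rho> by simp
  moreover have "(\<integral>\<^sup>+ w. ennreal (norm (x - w) powr s * indicator (cball x R) w) \<partial>lborel)
                 \<le> ennreal (V * 2 powr (-s) / (1 - \<rho>) * R powr (s + n))" if R: "0 < R" for x :: 'a and R
  proof -
    define a where "a k = (R / 2 ^ (k + 1)) powr s" for k :: nat
    define r where "r k = R / 2 ^ k" for k :: nat
    \<comment> \<open>on the shell \<open>R/2^(k+1) < |x-w| \<le> R/2^k\<close> the integrand is at most \<open>a k\<close>\<close>
    have "ennreal (norm (x - w) powr s * indicator (cball x R) w)
          \<le> (\<Sum>k. ennreal (a k) * indicator (cball x (r k)) w)" for w
    proof (cases "norm (x - w) = 0 \<or> R < norm (x - w)")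
      case False
      then have d: "0 < norm (x - w)" "norm (x - w) \<le> R" by auto
      then obtain k :: nat where k: "2 ^ k \<le> R / norm (x - w)" "R / norm (x - w) < 2 ^ (k + 1)"
        using ex_dyadic_bracket[of "R / norm (x - w)"] by auto
      have "norm (x - w) \<le> r k" "R / 2 ^ (k + 1) < norm (x - w)"
        using k d unfolding r_def by (simp_all add: field_simps)
      then have "ennreal (norm (x - w) powr s * indicator (cball x R) w)
                 \<le> ennreal (a k) * indicator (cball x (r k)) w"
        unfolding a_def using d s R by (auto simp: dist_norm indicator_def intro!: ennreal_leI powr_mono2')
      also have "\<dots> \<le> (\<Sum>k. ennreal (a k) * indicator (cball x (r k)) w)"
        by (rule ennreal_le_suminf)
      finally show ?thesis .
    qed (auto simp: dist_norm)
    moreover have "a k * (V * r k ^ n) = V * 2 powr (-s) * R powr (s + n) * \<rho> ^ k" for k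
    proof -
      have "a k = R powr s * 2 powr (-s) * (2 powr (-s)) ^ k"
        using powr_divide_two_pow[OF R, of "k + 1" s] by (simp add: a_def mult_ac)
      moreover have "r k ^ n = R powr n * (2 powr (- real n)) ^ k"
        using powr_divide_two_pow[OF R, of k n] R by (simp add: r_def powr_realpow)
      moreover have "R powr (s + n) = R powr s * R powr n" "\<rho> = 2 powr (-s) * 2 powr (- real n)"
        unfolding \<rho>_def by (simp_all only: powr_add minus_add mult.commute)
      ultimately show ?thesis
        by (simp add: power_mult_distrib mult_ac)
    qed
    ultimately have "(\<integral>\<^sup>+ w. ennreal (norm (x - w) powr s * indicator (cball x R) w) \<partial>lborel)
                     \<le> ennreal (V * 2 powr (-s) * R powr (s + n) / (1 - \<rho>))"
      using R \<rho> unfolding V_def n_def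
      by (intro nn_integral_le_dyadic_cover[where a = a and r = r]) (auto simp: a_def r_def)
    then show ?thesis
      by (simp add: mult.commute[of _ "R powr (s + n)"])
  qed
  ultimately show ?thesis
    unfolding n_def by blast
qed

lemma nn_integral_jbr_powr_finite:
  assumes "3 < c"
  shows "(\<integral>\<^sup>+ w. ennreal (jbr w powr (-c)) \<partial>lborel) < \<infinity>"
proof -
  define \<rho> where "\<rho> = 2 powr (3 - c)"
  define a where "a k = (2 powr (-c)) ^ k" for k :: nat
  define r where "r k = (2::real) ^ (k + 1)" for k :: nat
  have \<rho>: "0 < \<rho>" "\<rho> < 1"
    unfolding \<rho>_def using assms powr_less_mono[of "3 - c" 0 2] by auto
  \<comment> \<open>on the shell \<open>2^k \<le> |w| < 2^(k+1)\<close> the integrand is at most \<open>a k\<close>\<close>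
  have "ennreal (jbr w powr (-c)) \<le> (\<Sum>k. ennreal (a k) * indicator (cball 0 (r k)) w)" for w
  proof -
    obtain k :: nat where k: "jbr w powr (-c) \<le> a k" "norm w \<le> r k"
    proof (cases "norm w < 1")
      case True
      then have "jbr w powr (-c) \<le> a 0" "norm w \<le> r 0"
        using powr_mono2'[of "-c" 1 "jbr w"] jbr_ge_1[of w] assms by (simp_all add: a_def r_def)
      then show ?thesis using that by blast
    next
      case False
      then obtain k :: nat where k: "2 ^ k \<le> norm w" "norm w < 2 ^ (k + 1)"
        using ex_dyadic_bracket[of "norm w"] by auto
      have "jbr w powr (-c) \<le> (2 ^ k) powr (-c)"
        using k norm_le_jbr[of w] assms by (intro powr_mono2') auto
      then show ?thesis
        using that[of k] k by (simp add: a_def r_def two_pow_powr)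
    qed
    then have "ennreal (jbr w powr (-c)) \<le> ennreal (a k) * indicator (cball 0 (r k)) w"
      by (auto simp: indicator_def intro!: ennreal_leI)
    also have "\<dots> \<le> (\<Sum>k. ennreal (a k) * indicator (cball 0 (r k)) w)"
      by (rule ennreal_le_suminf)
    finally show ?thesis .
  qed
  moreover have "a k * (unit_ball_vol 3 * r k ^ 3) = 8 * unit_ball_vol 3 * \<rho> ^ k" for k
  proof -
    have "\<rho> = 8 * 2 powr (-c)"
      unfolding \<rho>_def using powr_add[of 2 3 "-c"] by simp
    moreover have "((2::real) ^ k) ^ 3 = (2 ^ 3) ^ k"
      by (simp only: power_mult[symmetric] mult.commute)
    ultimately show ?thesis
      by (simp add: a_def r_def power_mult_distrib)
  qed
  ultimately have "(\<integral>\<^sup>+ w. ennreal (jbr w powr (-c)) \<partial>lborel) \<le> ennreal (8 * unit_ball_vol 3 / (1 - \<rho>))"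
    using \<rho> by (intro nn_integral_le_dyadic_cover[where x = "0 :: R3" and a = a and r = r]) (auto simp: a_def r_def)
  then show ?thesis
    using le_less_trans by fastforce
qed

lemma norm_powr_jbr_powr_split:
  assumes "s < 0" "0 < c"
  shows "norm (v - w) powr s * jbr w powr (-c)
         \<le> 2 powr (-s) * jbr v powr s * jbr w powr (-c)
           + 6 powr c * jbr v powr (-c) * (norm (v - w) powr s * indicator (cball v (jbr v / 2)) w)"
proof (cases "jbr v / 2 < norm (v - w)")
  case True
  have "norm (v - w) powr s \<le> (jbr v / 2) powr s"
    using True jbr_pos[of v] assms by (intro powr_mono2') auto
  also have "\<dots> = 2 powr (-s) * jbr v powr s"
    using powr_divide_two_pow[OF jbr_pos, of v 1 s] by simp
  finally have "norm (v - w) powr s * jbr w powr (-c) \<le> 2 powr (-s) * jbr v powr s * jbr w powr (-c)"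
    by (rule mult_right_mono) simp
  moreover have "0 \<le> 6 powr c * jbr v powr (-c) * (norm (v - w) powr s * indicator (cball v (jbr v / 2)) w)"
    by simp
  ultimately show ?thesis
    by linarith
next
  case False
  then have "jbr w powr (-c) \<le> (jbr v / 6) powr (-c)"
    using jbr_ge_if_near[of v w] jbr_pos[of v] assms by (intro powr_mono2') auto
  also have "\<dots> = 6 powr c * jbr v powr (-c)"
    using jbr_pos[of v] by (simp add: powr_divide powr_minus_divide)
  finally have "norm (v - w) powr s * jbr w powr (-c) \<le> norm (v - w) powr s * (6 powr c * jbr v powr (-c))"
    by (rule mult_left_mono) simp
  also have "\<dots> = 6 powr c * jbr v powr (-c) * (norm (v - w) powr s * indicator (cball v (jbr v / 2)) w)"
    using False by (simp add: dist_norm)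
  finally show ?thesis
    by (simp add: add_increasing)
qed

lemma nn_integral_norm_powr_jbr_powr_le:
  assumes s: "-3 < s" "s < 0" and c: "3 < c"
  shows "\<exists>C>0. \<forall>v. (\<integral>\<^sup>+ w. ennreal (norm (v - w) powr s * jbr w powr (-c)) \<partial>lborel)
                    \<le> ennreal (C * jbr v powr s)"
proof -
  define T where "T = enn2real (\<integral>\<^sup>+ w. ennreal (jbr w powr (-c)) \<partial>lborel)"
  have T: "(\<integral>\<^sup>+ w. ennreal (jbr w powr (-c)) \<partial>lborel) = ennreal T" "0 \<le> T"
    unfolding T_def using nn_integral_jbr_powr_finite[OF c] by (simp_all add: less_top)
  have dim: "real DIM(R3) = 3"
    by simp
  have "\<exists>D>0. \<forall>(v::R3) R. 0 < R \<longrightarrow>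
      (\<integral>\<^sup>+ w. ennreal (norm (v - w) powr s * indicator (cball v R) w) \<partial>lborel) \<le> ennreal (D * R powr (s + 3))"
    using nn_integral_norm_powr_cball_le[where 'a = R3, of s] s by (simp only: dim)
  then obtain D where "0 < D" and near: "\<forall>(v::R3) R. 0 < R \<longrightarrow>
      (\<integral>\<^sup>+ w. ennreal (norm (v - w) powr s * indicator (cball v R) w) \<partial>lborel) \<le> ennreal (D * R powr (s + 3))"
    by blast
  define C where "C = 2 powr (-s) * T + 6 powr c * D"
  have "0 < C"
    unfolding C_def using T \<open>0 < D\<close> by (intro add_nonneg_pos) auto
  moreover have "(\<integral>\<^sup>+ w. ennreal (norm (v - w) powr s * jbr w powr (-c)) \<partial>lborel)
                  \<le> ennreal (C * jbr v powr s)" for v :: R3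
  proof -
    define A where "A = 2 powr (-s) * jbr v powr s"
    define B where "B = 6 powr c * jbr v powr (-c)"
    have AB: "0 \<le> A" "0 \<le> B"
      unfolding A_def B_def by auto
    have "jbr v powr (-c) * (jbr v / 2) powr (s + 3) \<le> jbr v powr (-c) * jbr v powr (s + 3)"
      using jbr_pos[of v] s by (intro mult_left_mono powr_mono2) auto
    also have "\<dots> = jbr v powr (-c + (s + 3))"
      by (rule powr_add[symmetric])
    also have "\<dots> \<le> jbr v powr s"
      using jbr_ge_1[of v] c by (intro powr_mono) auto
    finally have "6 powr c * D * (jbr v powr (-c) * (jbr v / 2) powr (s + 3)) \<le> 6 powr c * D * jbr v powr s"
      using \<open>0 < D\<close> by (intro mult_left_mono) auto
    then have B_near: "B * (D * (jbr v / 2) powr (s + 3)) \<le> 6 powr c * D * jbr v powr s"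
      unfolding B_def by (simp only: mult_ac)
    have "(\<integral>\<^sup>+ w. ennreal (norm (v - w) powr s * jbr w powr (-c)) \<partial>lborel)
          \<le> (\<integral>\<^sup>+ w. ennreal A * ennreal (jbr w powr (-c))
                 + ennreal B * ennreal (norm (v - w) powr s * indicator (cball v (jbr v / 2)) w) \<partial>lborel)"
    proof (rule nn_integral_mono)
      fix w
      have "ennreal (norm (v - w) powr s * jbr w powr (-c))
            \<le> ennreal (A * jbr w powr (-c) + B * (norm (v - w) powr s * indicator (cball v (jbr v / 2)) w))"
        using norm_powr_jbr_powr_split[of s c v w] s c unfolding A_def B_def by (intro ennreal_leI) auto
      then show "ennreal (norm (v - w) powr s * jbr w powr (-c))
            \<le> ennreal A * ennreal (jbr w powr (-c))
              + ennreal B * ennreal (norm (v - w) powr s * indicator (cball v (jbr v / 2)) w)"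
        using AB by (simp add: ennreal_plus ennreal_mult)
    qed
    also have "\<dots> = ennreal A * (\<integral>\<^sup>+ w. ennreal (jbr w powr (-c)) \<partial>lborel)
          + ennreal B * (\<integral>\<^sup>+ w. ennreal (norm (v - w) powr s * indicator (cball v (jbr v / 2)) w) \<partial>lborel)"
      by (simp add: nn_integral_add nn_integral_cmult)
    also have "\<dots> \<le> ennreal A * ennreal T + ennreal B * ennreal (D * (jbr v / 2) powr (s + 3))"
      using near jbr_pos[of v] T by (intro add_mono mult_left_mono) auto
    also have "\<dots> = ennreal (A * T + B * (D * (jbr v / 2) powr (s + 3)))"
      using AB T \<open>0 < D\<close> by (simp add: ennreal_plus ennreal_mult)
    also have "\<dots> \<le> ennreal (C * jbr v powr s)"
    proof (rule ennreal_leI)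
      have "C * jbr v powr s = A * T + 6 powr c * D * jbr v powr s"
        unfolding A_def C_def by (simp add: algebra_simps)
      then show "A * T + B * (D * (jbr v / 2) powr (s + 3)) \<le> C * jbr v powr s"
        using B_near by linarith
    qed
    finally show ?thesis .
  qed
  ultimately show ?thesis
    by blast
qed

lemma nn_integral_mult_eq_0_if_powr_eq_0:
  fixes F G :: "'a \<Rightarrow> real"
  assumes [measurable]: "F \<in> borel_measurable M"
    and zero: "(\<integral>\<^sup>+ x. ennreal (F x powr p) \<partial>M) = 0"
  shows "(\<integral>\<^sup>+ x. ennreal (F x * G x) \<partial>M) = 0"
proof -
  have "AE x in M. ennreal (F x powr p) = 0"
    using zero by (subst (asm) nn_integral_0_iff_AE) auto
  then have "AE x in M. ennreal (F x * G x) = 0"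
    by eventually_elim auto
  then show ?thesis
    by (simp add: nn_integral_0_iff_AE[symmetric] nn_integral_cong_AE)
qed

lemma nn_integral_mult_le_Holder:
  fixes F G :: "'a \<Rightarrow> real"
  assumes [measurable]: "F \<in> borel_measurable M" "G \<in> borel_measurable M"
    and F: "\<And>x. 0 \<le> F x" and G: "\<And>x. 0 \<le> G x"
    and pq: "1 < p" "1 < q" "1 / p + 1 / q = 1"
    and A: "(\<integral>\<^sup>+ x. ennreal (F x powr p) \<partial>M) \<le> ennreal A"
    and B: "(\<integral>\<^sup>+ x. ennreal (G x powr q) \<partial>M) \<le> ennreal B"
  shows "(\<integral>\<^sup>+ x. ennreal (F x * G x) \<partial>M) \<le> ennreal (A powr (1 / p) * B powr (1 / q))"
proof (cases "A \<le> 0 \<or> B \<le> 0")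
  case True
  then have "(\<integral>\<^sup>+ x. ennreal (F x * G x) \<partial>M) = 0"
  proof
    assume "A \<le> 0"
    then show ?thesis
      using A by (intro nn_integral_mult_eq_0_if_powr_eq_0[of F M p]) (auto simp: ennreal_neg)
  next
    assume "B \<le> 0"
    then show ?thesis
      using B nn_integral_mult_eq_0_if_powr_eq_0[of G M q F] by (simp add: ennreal_neg mult.commute)
  qed
  then show ?thesis
    by simp
next
  case False
  then have "0 < A" "0 < B"
    by auto
  define a where "a = A powr (1 / p)"
  define b where "b = B powr (1 / q)"
  have ab: "0 < a" "0 < b" "a powr p = A" "b powr q = B"
    unfolding a_def b_def using \<open>0 < A\<close> \<open>0 < B\<close> pq by (simp_all add: powr_powr)
  define \<alpha> where "\<alpha> = a * b / (p * A)"
  define \<beta> where "\<beta> = a * b / (q * B)"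
  have \<alpha>\<beta>: "0 \<le> \<alpha>" "0 \<le> \<beta>"
    unfolding \<alpha>_def \<beta>_def using ab pq by auto
  have Young: "F x * G x \<le> \<alpha> * F x powr p + \<beta> * G x powr q" for x
  proof -
    have "(F x / a) * (G x / b) \<le> (F x / a) powr p / p + (G x / b) powr q / q"
      using F[of x] G[of x] ab pq by (intro Youngs_inequality) auto
    also have "\<dots> = F x powr p / A / p + G x powr q / B / q"
      using F[of x] G[of x] ab by (simp add: powr_divide)
    finally have "a * b * ((F x / a) * (G x / b)) \<le> a * b * (F x powr p / A / p + G x powr q / B / q)"
      using ab by (intro mult_left_mono) auto
    then show ?thesis
      using ab unfolding \<alpha>_def \<beta>_def by (simp add: field_simps)
  qed
  have "(\<integral>\<^sup>+ x. ennreal (F x * G x) \<partial>M)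
        \<le> (\<integral>\<^sup>+ x. ennreal \<alpha> * ennreal (F x powr p) + ennreal \<beta> * ennreal (G x powr q) \<partial>M)"
  proof (rule nn_integral_mono)
    fix x
    show "ennreal (F x * G x) \<le> ennreal \<alpha> * ennreal (F x powr p) + ennreal \<beta> * ennreal (G x powr q)"
      using ennreal_leI[OF Young[of x]] \<alpha>\<beta> by (simp add: ennreal_plus ennreal_mult)
  qed
  also have "\<dots> = ennreal \<alpha> * (\<integral>\<^sup>+ x. ennreal (F x powr p) \<partial>M)
                   + ennreal \<beta> * (\<integral>\<^sup>+ x. ennreal (G x powr q) \<partial>M)"
    by (simp add: nn_integral_add nn_integral_cmult)
  also have "\<dots> \<le> ennreal \<alpha> * ennreal A + ennreal \<beta> * ennreal B"
    using A B by (intro add_mono mult_left_mono) auto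
  also have "\<dots> = ennreal (\<alpha> * A + \<beta> * B)"
    using \<alpha>\<beta> \<open>0 < A\<close> \<open>0 < B\<close> by (simp add: ennreal_plus ennreal_mult)
  also have "\<alpha> * A + \<beta> * B = a * b * (1 / p + 1 / q)"
    using \<open>0 < A\<close> \<open>0 < B\<close> pq unfolding \<alpha>_def \<beta>_def by (simp add: field_simps)
  finally show ?thesis
    unfolding a_def b_def pq(3) by simp
qed

definition weighted_potential :: "real \<Rightarrow> real \<Rightarrow> (R3 \<Rightarrow> real) \<Rightarrow> R3 \<Rightarrow> ennreal" where
  "weighted_potential a \<beta> f v = (\<integral>\<^sup>+ w. ennreal (norm (v - w) powr a * jbr w powr \<beta> * \<bar>f w\<bar>) \<partial>lborel)"

lemma weighted_potential_factor:
  "weighted_potential a \<beta> f v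
   = (\<integral>\<^sup>+ w. ennreal (\<bar>jbr w powr \<theta> * f w\<bar> * (norm (v - w) powr a * jbr w powr (\<beta> - \<theta>))) \<partial>lborel)"
proof -
  have "jbr w powr \<beta> = jbr w powr \<theta> * jbr w powr (\<beta> - \<theta>)" for w
    by (simp flip: powr_add)
  then show ?thesis
    unfolding weighted_potential_def by (intro nn_integral_cong) (simp add: abs_mult mult_ac)
qed

lemma weighted_potential_le_Lp:
  assumes a: "a < 0" and P: "1 < P"
    and aP: "-3 < a * (P / (P - 1))" and \<theta>P: "3 < (\<theta> - \<beta>) * (P / (P - 1))"
  shows "\<exists>C>0. \<forall>f v. f \<in> borel_measurable lborel \<longrightarrow>
           weighted_potential a \<beta> f v \<le> ennreal (C * jbr v powr a) * wLp_norm (ennreal P) (\<lambda>x. jbr x powr \<theta>) f"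
proof -
  define q where "q = P / (P - 1)"
  have q: "1 < q" "1 / P + 1 / q = 1"
    unfolding q_def using P by (simp_all add: field_simps)
  obtain K where K: "0 < K" and bound: "\<And>v.
      (\<integral>\<^sup>+ w. ennreal (norm (v - w) powr (a * q) * jbr w powr (-((\<theta> - \<beta>) * q))) \<partial>lborel)
      \<le> ennreal (K * jbr v powr (a * q))"
    using nn_integral_norm_powr_jbr_powr_le[of "a * q" "(\<theta> - \<beta>) * q"] a aP \<theta>P q
    unfolding q_def[symmetric] by (auto simp: mult_neg_pos)
  define C where "C = K powr (1 / q)"
  have "0 < C"
    unfolding C_def using K by simp
  moreover have "weighted_potential a \<beta> f v \<le> ennreal (C * jbr v powr a) * wLp_norm (ennreal P) (\<lambda>x. jbr x powr \<theta>) f"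
    if [measurable]: "f \<in> borel_measurable lborel" for f v
  proof -
    define I where "I = (\<integral>\<^sup>+ x. ennreal (\<bar>jbr x powr \<theta> * f x\<bar> powr P) \<partial>lborel)"
    have norm: "wLp_norm (ennreal P) (\<lambda>x. jbr x powr \<theta>) f
                = (if I = \<infinity> then \<infinity> else ennreal (enn2real I powr (1 / P)))"
      unfolding wLp_norm_def I_def using P by (simp add: Let_def)
    show ?thesis
    proof (cases "I = \<infinity>")
      case True
      then show ?thesis
        using \<open>0 < C\<close> jbr_pos[of v] by (simp add: norm ennreal_mult_top)
    next
      case False
      have "(\<integral>\<^sup>+ w. ennreal ((norm (v - w) powr a * jbr w powr (\<beta> - \<theta>)) powr q) \<partial>lborel)
            \<le> ennreal (K * jbr v powr (a * q))"
        using bound[of v] by (simp add: powr_mult powr_powr mult_ac right_diff_distrib)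
      then have "weighted_potential a \<beta> f v \<le> ennreal (enn2real I powr (1 / P) * (K * jbr v powr (a * q)) powr (1 / q))"
        unfolding weighted_potential_factor[where \<theta> = \<theta>]
        using False P q by (intro nn_integral_mult_le_Holder) (auto simp: I_def less_top)
      also have "(K * jbr v powr (a * q)) powr (1 / q) = C * jbr v powr a"
        unfolding C_def using K q by (simp add: powr_mult powr_powr)
      finally show ?thesis
        using False \<open>0 < C\<close> by (simp add: norm ennreal_mult mult.commute)
    qed
  qed
  ultimately show ?thesis
    by blast
qed

lemma weighted_potential_le_Linf:
  assumes a: "-3 < a" "a < 0" and \<theta>: "3 < \<theta> - \<beta>"
  shows "\<exists>C>0. \<forall>f v. f \<in> borel_measurable lborel \<longrightarrow>
           weighted_potential a \<beta> f v \<le> ennreal (C * jbr v powr a) * wLp_norm \<infinity> (\<lambda>x. jbr x powr \<theta>) f"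
proof -
  obtain C where C: "0 < C" and bound: "\<And>v.
      (\<integral>\<^sup>+ w. ennreal (norm (v - w) powr a * jbr w powr (\<beta> - \<theta>)) \<partial>lborel)
      \<le> ennreal (C * jbr v powr a)"
    using nn_integral_norm_powr_jbr_powr_le[of a "\<theta> - \<beta>"] a \<theta> by auto
  have "weighted_potential a \<beta> f v \<le> ennreal (C * jbr v powr a) * wLp_norm \<infinity> (\<lambda>x. jbr x powr \<theta>) f"
    if [measurable]: "f \<in> borel_measurable lborel" for f v
  proof -
    define E where "E = wLp_norm \<infinity> (\<lambda>x. jbr x powr \<theta>) f"
    have "AE x in lborel. ennreal \<bar>jbr x powr \<theta> * f x\<bar> \<le> E"
      unfolding E_def wLp_norm_def by (simp add: esssup_AE)
    then have "weighted_potential a \<beta> f v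
               \<le> (\<integral>\<^sup>+ w. E * ennreal (norm (v - w) powr a * jbr w powr (\<beta> - \<theta>)) \<partial>lborel)"
      unfolding weighted_potential_factor[where \<theta> = \<theta>]
      by (intro nn_integral_mono_AE) (auto elim!: eventually_mono intro: mult_right_mono simp: ennreal_mult)
    also have "\<dots> = E * (\<integral>\<^sup>+ w. ennreal (norm (v - w) powr a * jbr w powr (\<beta> - \<theta>)) \<partial>lborel)"
      by (simp add: nn_integral_cmult)
    also have "\<dots> \<le> E * ennreal (C * jbr v powr a)"
      using bound by (rule mult_left_mono) simp
    finally show ?thesis
      unfolding E_def by (simp add: mult.commute)
  qed
  with C show ?thesis
    by blast
qed

lemma weighted_potential_le_wLp_norm:
  assumes a: "-3 < a" "a < 0" and p: "ennreal (3 / (3 + a)) < p" and \<theta>: "3 * (1 - inv_exp p) < \<theta> - \<beta>"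
  shows "\<exists>C>0. \<forall>f v. f \<in> borel_measurable lborel \<longrightarrow>
           weighted_potential a \<beta> f v \<le> ennreal (C * jbr v powr a) * wLp_norm p (\<lambda>x. jbr x powr \<theta>) f"
proof (cases "p = \<infinity>")
  case True
  then show ?thesis
    using weighted_potential_le_Linf[OF a] \<theta> by (simp add: inv_exp_def)
next
  case False
  then obtain P where p_eq: "p = ennreal P" and "0 \<le> P"
    by (cases p) auto
  have P: "3 / (3 + a) < P"
    using p a unfolding p_eq by (simp add: ennreal_less_iff)
  moreover have "1 < 3 / (3 + a)"
    using a by (simp add: field_simps)
  ultimately have "1 < P"
    by linarith
  have "-3 < a * (P / (P - 1))"
    using P a \<open>1 < P\<close> by (simp add: field_simps)
  moreover have "3 < (\<theta> - \<beta>) * (P / (P - 1))"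
    using \<theta> \<open>1 < P\<close> \<open>0 \<le> P\<close> unfolding p_eq inv_exp_def by (simp add: field_simps)
  ultimately show ?thesis
    using weighted_potential_le_Lp[OF a(2) \<open>1 < P\<close>] unfolding p_eq by blast
qed

text \<open>Orthogonal projection onto the complement of \<open>z\<close>; for \<open>z = 0\<close> (division by zero) it is the identity.\<close>
definition perp :: "'a::real_inner \<Rightarrow> 'a \<Rightarrow> 'a" where
  "perp z u = u - ((z \<bullet> u) / (norm z)\<^sup>2) *\<^sub>R z"

lemma perp_add_self: "perp z (z + u) = perp z u"
proof (cases "z = 0")
  case False
  then have "(z \<bullet> (z + u)) / (norm z)\<^sup>2 = 1 + (z \<bullet> u) / (norm z)\<^sup>2"
    by (simp add: inner_add_right power2_norm_eq_inner field_simps)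
  then show ?thesis
    unfolding perp_def by (simp add: scaleR_add_left algebra_simps)
qed (simp add: perp_def)

lemma perp_orthogonal: "perp z u \<bullet> z = 0"
  unfolding perp_def inner_diff_left inner_scaleR_left power2_norm_eq_inner
  by (cases "z = 0") (simp_all add: inner_commute)

lemma norm_perp_le: "norm (perp z u) \<le> norm u"
proof -
  have "perp z u \<bullet> perp z u = perp z u \<bullet> u"
    by (subst (2) perp_def) (simp add: inner_diff_right perp_orthogonal)
  also have "\<dots> \<le> norm (perp z u) * norm u"
    by (rule norm_cauchy_schwarz)
  finally have "norm (perp z u) * norm (perp z u) \<le> norm (perp z u) * norm u"
    by (simp add: power2_eq_square flip: power2_norm_eq_inner)
  then show ?thesis
    by (cases "perp z u = 0") auto
qed

lemma perp_diff_self: "perp (v - w) v = perp (v - w) w"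
  using perp_add_self[of "v - w" w] by simp

lemma abs_perp_diff_inner_le: "\<bar>perp (v - w) v \<bullet> v\<bar> \<le> (norm w)\<^sup>2"
proof -
  have "perp (v - w) v \<bullet> v = perp (v - w) w \<bullet> ((v - w) + w)"
    using perp_diff_self[of v w] by simp
  also have "\<dots> = perp (v - w) w \<bullet> w"
    by (simp only: inner_add_right perp_orthogonal add_0_left)
  finally have "\<bar>perp (v - w) v \<bullet> v\<bar> \<le> norm (perp (v - w) w) * norm w"
    by (simp add: Cauchy_Schwarz_ineq2)
  also have "\<dots> \<le> (norm w)\<^sup>2"
    by (simp add: power2_eq_square mult_right_mono norm_perp_le)
  finally show ?thesis .
qed

lemma akernel_row_sum: "(\<Sum>k\<in>UNIV. akernel \<gamma> k j z * u $ k) = norm z powr (\<gamma> + 2) * perp z u $ j"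
proof -
  define e where "e = norm z powr (\<gamma> + 2)"
  have "(\<Sum>k\<in>UNIV. akernel \<gamma> k j z * u $ k)
        = (\<Sum>k\<in>UNIV. (if k = j then e * u $ k else 0) - e * (z $ j / (norm z)\<^sup>2) * (z $ k * u $ k))"
    unfolding akernel_def e_def by (intro sum.cong) (auto simp: algebra_simps)
  also have "\<dots> = e * u $ j - e * (z $ j / (norm z)\<^sup>2) * (z \<bullet> u)"
    by (simp add: sum_subtractf inner_vec_def sum_distrib_left)
  finally show ?thesis
    unfolding perp_def e_def by (simp add: algebra_simps)
qed

lemma akernel_quadratic_form:
  "(\<Sum>k\<in>UNIV. \<Sum>l\<in>UNIV. akernel \<gamma> k l z * u $ k * u $ l) = norm z powr (\<gamma> + 2) * (perp z u \<bullet> u)"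
proof -
  have "(\<Sum>k\<in>UNIV. \<Sum>l\<in>UNIV. akernel \<gamma> k l z * u $ k * u $ l)
        = (\<Sum>l\<in>UNIV. (\<Sum>k\<in>UNIV. akernel \<gamma> k l z * u $ k) * u $ l)"
    by (subst sum.swap) (simp add: sum_distrib_right)
  then show ?thesis
    by (simp add: akernel_row_sum inner_vec_def sum_distrib_left mult.assoc)
qed

lemma akernel_eq_perp_axis: "akernel \<gamma> i j z = norm z powr (\<gamma> + 2) * perp z (axis i 1) $ j"
  unfolding akernel_def perp_def inner_axis by (simp add: axis_def)

lemma abs_perp_axis_le: "\<bar>perp z (axis i 1) $ j\<bar> \<le> 1" for z :: "real ^ 'n"
  using component_le_norm_cart[of "perp z (axis i 1)" j] norm_perp_le[of z "axis i 1"] by simp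

lemma abs_bkernel_le: "\<bar>bkernel \<gamma> j z\<bar> \<le> 2 * norm z powr (\<gamma> + 1)"
proof (cases "z = 0")
  case False
  have "\<bar>bkernel \<gamma> j z\<bar> \<le> 2 * norm z powr \<gamma> * norm z"
    unfolding bkernel_def by (simp add: abs_mult mult_left_mono component_le_norm_cart)
  then show ?thesis
    using False by (simp add: powr_add mult.assoc)
qed (simp add: bkernel_def)

lemma abs_integral_le_nn_integral: "ennreal \<bar>\<integral> x. h x \<partial>M\<bar> \<le> (\<integral>\<^sup>+ x. ennreal \<bar>h x\<bar> \<partial>M)"
  for h :: "'a \<Rightarrow> real"
proof (cases "integrable M h")
  case True
  then show ?thesis
    using integral_norm_bound_ennreal[OF True] by simp
qed (simp add: not_integrable_integral_eq)

lemma abs_conv_lincomb_le: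
  fixes K :: "'i \<Rightarrow> R3 \<Rightarrow> real" and c :: "'i \<Rightarrow> real" and g :: "R3 \<Rightarrow> real"
  assumes "finite S" and [measurable]: "f \<in> borel_measurable lborel"
    and meas: "\<And>k. k \<in> S \<Longrightarrow> (\<lambda>w. K k (v - w)) \<in> borel_measurable lborel"
    and single: "\<And>k w. k \<in> S \<Longrightarrow> \<bar>K k (v - w) * f w\<bar> \<le> g w"
    and combined: "\<And>w. \<bar>(\<Sum>k\<in>S. K k (v - w) * c k) * f w\<bar> \<le> g w"
  shows "ennreal \<bar>\<Sum>k\<in>S. conv (K k) f v * c k\<bar> \<le> (\<integral>\<^sup>+ w. ennreal (g w) \<partial>lborel)"
proof (cases "(\<integral>\<^sup>+ w. ennreal (g w) \<partial>lborel) = \<infinity>")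
  case False
  have integrable: "integrable lborel (\<lambda>w. K k (v - w) * f w)" if "k \<in> S" for k
  proof (rule integrableI_bounded)
    show "(\<lambda>w. K k (v - w) * f w) \<in> borel_measurable lborel"
      using meas[OF that] by measurable
    have "(\<integral>\<^sup>+ w. ennreal (norm (K k (v - w) * f w)) \<partial>lborel) \<le> (\<integral>\<^sup>+ w. ennreal (g w) \<partial>lborel)"
      using single[OF that] by (intro nn_integral_mono ennreal_leI) simp
    then show "(\<integral>\<^sup>+ w. ennreal (norm (K k (v - w) * f w)) \<partial>lborel) < \<infinity>"
      using False by (simp add: le_less_trans less_top)
  qed
  have "(\<Sum>k\<in>S. conv (K k) f v * c k) = (\<Sum>k\<in>S. \<integral> w. K k (v - w) * f w * c k \<partial>lborel)"
    unfolding conv_def by simp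
  also have "\<dots> = (\<integral> w. (\<Sum>k\<in>S. K k (v - w) * f w * c k) \<partial>lborel)"
    using integrable by (subst Bochner_Integration.integral_sum) auto
  also have "\<dots> = (\<integral> w. (\<Sum>k\<in>S. K k (v - w) * c k) * f w \<partial>lborel)"
    by (intro Bochner_Integration.integral_cong refl) (simp add: sum_distrib_left sum_distrib_right mult_ac)
  finally have "ennreal \<bar>\<Sum>k\<in>S. conv (K k) f v * c k\<bar>
                \<le> (\<integral>\<^sup>+ w. ennreal \<bar>(\<Sum>k\<in>S. K k (v - w) * c k) * f w\<bar> \<partial>lborel)"
    by (simp add: abs_integral_le_nn_integral)
  also have "\<dots> \<le> (\<integral>\<^sup>+ w. ennreal (g w) \<partial>lborel)"
    using combined by (intro nn_integral_mono ennreal_leI)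
  finally show ?thesis .
qed simp

lemma jbr_powr_two: "jbr w powr 2 = 1 + (norm w)\<^sup>2"
  using jbr_pos[of w] unfolding jbr_def by simp

lemma jbr_powr_two_ge: "norm w \<le> jbr w powr 2" "1 \<le> jbr w powr 2" "(norm w)\<^sup>2 \<le> jbr w powr 2"
proof -
  have "0 \<le> (norm w - 1)\<^sup>2"
    by simp
  then have "2 * norm w \<le> 1 + (norm w)\<^sup>2"
    by (simp add: power2_eq_square algebra_simps)
  then show "norm w \<le> jbr w powr 2"
    unfolding jbr_powr_two using norm_ge_zero[of w] by linarith
  show "1 \<le> jbr w powr 2" "(norm w)\<^sup>2 \<le> jbr w powr 2"
    unfolding jbr_powr_two by simp_all
qed

lemma vec_nth_measurable [measurable]: "(\<lambda>x::R3. x $ i) \<in> borel_measurable borel"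
  by (intro borel_measurable_continuous_onI continuous_intros)

lemma akernel_measurable [measurable]: "akernel \<gamma> k l \<in> borel_measurable borel"
  unfolding akernel_def by measurable

lemma bkernel_measurable [measurable]: "bkernel \<gamma> k \<in> borel_measurable borel"
  unfolding bkernel_def by measurable

lemma landau_a_terms_le:
  assumes [measurable]: "f \<in> borel_measurable lborel"
  shows "ennreal (\<bar>\<Sum>k\<in>UNIV. \<Sum>l\<in>UNIV. conv (akernel \<gamma> k l) f v * v $ k * v $ l\<bar>
                  + \<bar>\<Sum>k\<in>UNIV. conv (akernel \<gamma> k j) f v * v $ k\<bar>
                  + \<bar>conv (akernel \<gamma> i j) f v\<bar>)
         \<le> 3 * weighted_potential (\<gamma> + 2) 2 f v"
proof -
  define g where "g w = norm (v - w) powr (\<gamma> + 2) * jbr w powr 2 * \<bar>f w\<bar>" for w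
  let ?P = "weighted_potential (\<gamma> + 2) 2 f v"
  have potential: "?P = (\<integral>\<^sup>+ w. ennreal (g w) \<partial>lborel)"
    unfolding weighted_potential_def g_def ..
  have weight: "\<bar>norm (v - w) powr (\<gamma> + 2) * X * f w\<bar> \<le> g w" if "\<bar>X\<bar> \<le> jbr w powr 2" for X w
    using that unfolding g_def by (simp add: abs_mult mult_left_mono mult_right_mono)
  have single: "\<bar>akernel \<gamma> k l (v - w) * f w\<bar> \<le> g w" for k l w
    using weight abs_perp_axis_le[of "v - w" k l] jbr_powr_two_ge(2)[of w]
    unfolding akernel_eq_perp_axis by (meson order_trans)
  have "(\<Sum>k\<in>UNIV. \<Sum>l\<in>UNIV. conv (akernel \<gamma> k l) f v * v $ k * v $ l)
        = (\<Sum>p\<in>UNIV \<times> UNIV. conv (akernel \<gamma> (fst p) (snd p)) f v * (v $ fst p * v $ snd p))"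
    by (subst sum.cartesian_product) (simp add: split_def mult.assoc)
  also have "ennreal \<bar>\<dots>\<bar> \<le> (\<integral>\<^sup>+ w. ennreal (g w) \<partial>lborel)"
  proof (rule abs_conv_lincomb_le)
    fix w
    have "(\<Sum>p\<in>UNIV \<times> UNIV. akernel \<gamma> (fst p) (snd p) (v - w) * (v $ fst p * v $ snd p))
          = norm (v - w) powr (\<gamma> + 2) * (perp (v - w) v \<bullet> v)"
      by (subst akernel_quadratic_form[symmetric], subst sum.cartesian_product) (simp add: split_def mult.assoc)
    then show "\<bar>(\<Sum>p\<in>UNIV \<times> UNIV. akernel \<gamma> (fst p) (snd p) (v - w) * (v $ fst p * v $ snd p)) * f w\<bar>
               \<le> g w"
      using weight abs_perp_diff_inner_le[of v w] jbr_powr_two_ge(3)[of w] by (metis order_trans)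
  qed (use single in auto)
  finally have T1: "ennreal \<bar>\<Sum>k\<in>UNIV. \<Sum>l\<in>UNIV. conv (akernel \<gamma> k l) f v * v $ k * v $ l\<bar>
                    \<le> ?P"
    unfolding potential .
  have "ennreal \<bar>\<Sum>k\<in>UNIV. conv (akernel \<gamma> k j) f v * v $ k\<bar> \<le> (\<integral>\<^sup>+ w. ennreal (g w) \<partial>lborel)"
  proof (rule abs_conv_lincomb_le)
    fix w
    have "\<bar>perp (v - w) v $ j\<bar> \<le> jbr w powr 2"
      using component_le_norm_cart[of "perp (v - w) w" j] norm_perp_le[of "v - w" w]
        jbr_powr_two_ge(1)[of w] perp_diff_self[of v w] by simp
    then show "\<bar>(\<Sum>k\<in>UNIV. akernel \<gamma> k j (v - w) * v $ k) * f w\<bar> \<le> g w"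
      unfolding akernel_row_sum by (rule weight)
  qed (use single in auto)
  then have T2: "ennreal \<bar>\<Sum>k\<in>UNIV. conv (akernel \<gamma> k j) f v * v $ k\<bar> \<le> ?P"
    unfolding potential .
  have "ennreal \<bar>conv (akernel \<gamma> i j) f v\<bar> \<le> (\<integral>\<^sup>+ w. ennreal \<bar>akernel \<gamma> i j (v - w) * f w\<bar> \<partial>lborel)"
    unfolding conv_def by (rule abs_integral_le_nn_integral)
  also have "\<dots> \<le> ?P"
    unfolding potential using single by (intro nn_integral_mono ennreal_leI)
  finally have T3: "ennreal \<bar>conv (akernel \<gamma> i j) f v\<bar> \<le> ?P" .
  have "ennreal (\<bar>\<Sum>k\<in>UNIV. \<Sum>l\<in>UNIV. conv (akernel \<gamma> k l) f v * v $ k * v $ l\<bar>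
                  + \<bar>\<Sum>k\<in>UNIV. conv (akernel \<gamma> k j) f v * v $ k\<bar>
                  + \<bar>conv (akernel \<gamma> i j) f v\<bar>)
        \<le> ?P + ?P + ?P"
    using add_mono[OF add_mono[OF T1 T2] T3] by (simp add: ennreal_plus)
  also have "?P + ?P + ?P = (1 + 1 + 1) * ?P"
    by (simp only: distrib_right mult_1)
  finally show ?thesis
    by simp
qed

lemma landau_b_term_le:
  assumes [measurable]: "f \<in> borel_measurable lborel"
  shows "ennreal \<bar>conv (bkernel \<gamma> j) f v\<bar> \<le> 2 * weighted_potential (\<gamma> + 1) 0 f v"
proof -
  have "ennreal \<bar>conv (bkernel \<gamma> j) f v\<bar> \<le> (\<integral>\<^sup>+ w. ennreal \<bar>bkernel \<gamma> j (v - w) * f w\<bar> \<partial>lborel)"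
    unfolding conv_def by (rule abs_integral_le_nn_integral)
  also have "\<dots> \<le> (\<integral>\<^sup>+ w. 2 * ennreal (norm (v - w) powr (\<gamma> + 1) * jbr w powr 0 * \<bar>f w\<bar>) \<partial>lborel)"
  proof (intro nn_integral_mono)
    fix w
    have "\<bar>bkernel \<gamma> j (v - w) * f w\<bar> \<le> 2 * (norm (v - w) powr (\<gamma> + 1) * jbr w powr 0 * \<bar>f w\<bar>)"
      using mult_right_mono[OF abs_bkernel_le[of \<gamma> j "v - w"] abs_ge_zero[of "f w"]] jbr_pos[of w]
      by (simp add: abs_mult mult.assoc)
    then have "ennreal \<bar>bkernel \<gamma> j (v - w) * f w\<bar>
               \<le> ennreal (2 * (norm (v - w) powr (\<gamma> + 1) * jbr w powr 0 * \<bar>f w\<bar>))"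
      by (rule ennreal_leI)
    then show "ennreal \<bar>bkernel \<gamma> j (v - w) * f w\<bar>
               \<le> 2 * ennreal (norm (v - w) powr (\<gamma> + 1) * jbr w powr 0 * \<bar>f w\<bar>)"
      by (simp add: ennreal_mult')
  qed
  also have "\<dots> = 2 * weighted_potential (\<gamma> + 1) 0 f v"
    unfolding weighted_potential_def by (rule nn_integral_cmult) measurable
  finally show ?thesis .
qed

lemma landau_a_bound:
  assumes "-3 < \<gamma> + 2" "\<gamma> + 2 < 0" "ennreal (3 / (3 + (\<gamma> + 2))) < p" "3 * (1 - inv_exp p) < \<theta> - 2"
  shows "\<exists>C. \<forall>f v i j. f \<in> borel_measurable lborel \<longrightarrow>
           ennreal (\<bar>\<Sum>k\<in>UNIV. \<Sum>l\<in>UNIV. conv (akernel \<gamma> k l) f v * v $ k * v $ l\<bar>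
                    + \<bar>\<Sum>k\<in>UNIV. conv (akernel \<gamma> k j) f v * v $ k\<bar>
                    + \<bar>conv (akernel \<gamma> i j) f v\<bar>)
             \<le> ennreal (C * jbr v powr (\<gamma> + 2)) * wLp_norm p (\<lambda>x. jbr x powr \<theta>) f"
proof -
  obtain C where potential: "\<And>f v. f \<in> borel_measurable lborel \<Longrightarrow>
      weighted_potential (\<gamma> + 2) 2 f v \<le> ennreal (C * jbr v powr (\<gamma> + 2)) * wLp_norm p (\<lambda>x. jbr x powr \<theta>) f"
    using weighted_potential_le_wLp_norm[OF assms] by blast
  have "ennreal (\<bar>\<Sum>k\<in>UNIV. \<Sum>l\<in>UNIV. conv (akernel \<gamma> k l) f v * v $ k * v $ l\<bar>
                  + \<bar>\<Sum>k\<in>UNIV. conv (akernel \<gamma> k j) f v * v $ k\<bar>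
                  + \<bar>conv (akernel \<gamma> i j) f v\<bar>)
        \<le> ennreal (3 * C * jbr v powr (\<gamma> + 2)) * wLp_norm p (\<lambda>x. jbr x powr \<theta>) f"
    if "f \<in> borel_measurable lborel" for f v i j
    using order_trans[OF landau_a_terms_le[OF that] mult_left_mono[OF potential[OF that]]]
    by (simp add: ennreal_mult' mult.assoc)
  then show ?thesis
    by blast
qed

lemma landau_b_bound:
  assumes "-3 < \<gamma> + 1" "\<gamma> + 1 < 0" "ennreal (3 / (3 + (\<gamma> + 1))) < p" "3 * (1 - inv_exp p) < \<theta>"
  shows "\<exists>C. \<forall>f v j. f \<in> borel_measurable lborel \<longrightarrow>
           ennreal \<bar>conv (bkernel \<gamma> j) f v\<bar>
             \<le> ennreal (C * jbr v powr (\<gamma> + 1)) * wLp_norm p (\<lambda>x. jbr x powr \<theta>) f"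
proof -
  have "3 * (1 - inv_exp p) < \<theta> - 0"
    using assms(4) by simp
  then obtain C where potential: "\<And>f v. f \<in> borel_measurable lborel \<Longrightarrow>
      weighted_potential (\<gamma> + 1) 0 f v \<le> ennreal (C * jbr v powr (\<gamma> + 1)) * wLp_norm p (\<lambda>x. jbr x powr \<theta>) f"
    using weighted_potential_le_wLp_norm[OF assms(1-3)] by blast
  have "ennreal \<bar>conv (bkernel \<gamma> j) f v\<bar>
        \<le> ennreal (2 * C * jbr v powr (\<gamma> + 1)) * wLp_norm p (\<lambda>x. jbr x powr \<theta>) f"
    if "f \<in> borel_measurable lborel" for f v j
    using order_trans[OF landau_b_term_le[OF that] mult_left_mono[OF potential[OF that]]]
    by (simp add: ennreal_mult' mult.assoc)
  then show ?thesis
    by blast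
qed

theorem lemma4p2:
  fixes \<gamma> :: real
  assumes "-3 \<le> \<gamma>" and "\<gamma> < -2"
  shows
    "(\<forall>(p::ennreal) (\<theta>::real).
        ennreal (3 / (3 + \<gamma> + 2)) < p \<and> \<theta> > 2 + 3 * (1 - inv_exp p) \<longrightarrow>
        (\<exists>C::real. \<forall>(f::R3 \<Rightarrow> real) (v::R3) (i::3) (j::3).
           f \<in> borel_measurable lborel \<longrightarrow>
           ennreal (\<bar>\<Sum>k\<in>UNIV. \<Sum>l\<in>UNIV. conv (akernel \<gamma> k l) f v * v $ k * v $ l\<bar>
                    + \<bar>\<Sum>k\<in>UNIV. conv (akernel \<gamma> k j) f v * v $ k\<bar>
                    + \<bar>conv (akernel \<gamma> i j) f v\<bar>)
             \<le> ennreal (C * jbr v powr (\<gamma> + 2)) * wLp_norm p (\<lambda>x. jbr x powr \<theta>) f))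
     \<and>
     (\<forall>(p::ennreal) (\<theta>'::real).
        ennreal (3 / (3 + \<gamma> + 1)) < p \<and> \<theta>' > 3 * (1 - inv_exp p) \<longrightarrow>
        (\<exists>C::real. \<forall>(f::R3 \<Rightarrow> real) (v::R3) (j::3).
           f \<in> borel_measurable lborel \<longrightarrow>
           ennreal \<bar>conv (bkernel \<gamma> j) f v\<bar>
             \<le> ennreal (C * jbr v powr (\<gamma> + 1)) * wLp_norm p (\<lambda>x. jbr x powr \<theta>') f))"
  using assms by (intro conjI allI impI landau_a_bound landau_b_bound) (auto simp: add.assoc)

end
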